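(* Let $m\ge 3$. For every $\epsilon>0$ there exists $\delta>0$ such that for every polynomial $f(z)=z^{m}+\sum_{k=0}^{m-1}a_kz^k$ satisfying the $\delta$-condition and $|a_{0}|\ge 2^{\frac{1}{m-1}}+\epsilon$, one has $|a_{0}|-b(f)\ge\frac{\epsilon}{3}$; equivalently, $\{z\in\mathbb{C}: |z|\ge |a_0|-\tfrac{\epsilon}{3}\}\subseteq\Omega(f)$.
   Context: A monic polynomial $f(z)=z^{m}+\sum_{k=0}^{m-1}a_{k}z^{k}$ satisfies the $\delta$-condition if $|a_{k}|<\delta$ for all $1\le k\le m-1$ (no condition on $a_0$). $\Omega(f)=\{z\in\hat{\mathbb{C}}: f^{n}(z)\to\infty \text{ as } n\to+\infty\}$ ($f^n$ the $n$-th iterate), and $b(f)=\sup\{|z|: z\in\mathbb{C}\setminus\Omega(f)\}$. *)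

theory Defs
  imports "HOL-Analysis.Analysis"
begin

definition monic_poly :: "nat \<Rightarrow> (nat \<Rightarrow> complex) \<Rightarrow> complex \<Rightarrow> complex" where
  "monic_poly m a z = z ^ m + (\<Sum>k<m. a k * z ^ k)"

definition delta_condition :: "nat \<Rightarrow> real \<Rightarrow> (nat \<Rightarrow> complex) \<Rightarrow> bool" where
  "delta_condition m \<delta> a \<longleftrightarrow> (\<forall>k. 1 \<le> k \<and> k \<le> m - 1 \<longrightarrow> norm (a k) < \<delta>)"

text \<open>Finite part of the escaping set Omega(f): points whose orbit tends to infinity.\<close>
definition escape_set :: "(complex \<Rightarrow> complex) \<Rightarrow> complex set" where
  "escape_set f = {z. filterlim (\<lambda>n. (f ^^ n) z) at_infinity sequentially}"

definition escape_bound :: "(complex \<Rightarrow> complex) \<Rightarrow> real" where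
  "escape_bound f = (SUP z \<in> - escape_set f. norm z)"

end

theory Submission
  imports Defs "HOL-Computational_Algebra.Fundamental_Theorem_Algebra"
begin

text \<open>
  Put \<open>t = 2 powr (1 / (m - 1))\<close>, so \<open>t ^ (m - 1) = 2\<close>. If \<open>|z| = r \<ge> |a\<^sub>0| - \<epsilon>/3 \<ge> t + 2\<epsilon>/3\<close>,
  then \<open>r ^ (m - 1) \<ge> 2 + 2\<epsilon>/3\<close>. The middle coefficients contribute at most \<open>\<eta> r ^ m\<close>
  with \<open>\<eta> = (m - 1) \<delta>\<close>, so for small \<open>\<delta>\<close> the leading term dominates:
  \<open>|f z| \<ge> (1 - \<eta>) r ^ m - |a\<^sub>0| \<ge> 2r + \<epsilon>/2 - (r + \<epsilon>/3) = r + \<epsilon>/6\<close>.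
  Hence on \<open>|z| \<ge> |a\<^sub>0| - \<epsilon>/3\<close> every orbit gains at least \<open>\<epsilon>/6\<close> in modulus per step and
  escapes. The complement of the escaping set is nonempty because \<open>f\<close> has a fixed point,
  so \<open>b(f) \<le> |a\<^sub>0| - \<epsilon>/3\<close>.
\<close>

lemma monic_poly_has_fixed_point:
  assumes "m \<ge> 2"
  shows "\<exists>z. monic_poly m a z = z"
proof -
  define p :: "complex poly" where "p = monom 1 m + (\<Sum>k<m. monom (a k) k) - [:0, 1:]"
  have poly_p: "poly p z = monic_poly m a z - z" for z
    by (simp add: p_def monic_poly_def poly_sum poly_monom)
  obtain k where "m = Suc (Suc k)"
    using assms by (metis add_2_eq_Suc le_Suc_ex)
  then have "coeff p m = 1"
    by (simp add: p_def coeff_sum coeff_monom)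
  then have "degree p \<ge> m"
    by (simp add: le_degree)
  then have "\<not> constant (poly p)"
    using assms constant_degree[of p] by simp
  then obtain z where "poly p z = 0"
    using fundamental_theorem_of_algebra by blast
  then show ?thesis
    using poly_p by auto
qed

lemma fixed_point_notin_escape_set:
  assumes "f w = w"
  shows "w \<notin> escape_set f"
proof -
  have "(f ^^ n) w = w" for n
    by (induction n) (simp_all add: assms)
  then show ?thesis
    unfolding escape_set_def
    using not_tendsto_and_filterlim_at_infinity[of sequentially "\<lambda>n. w" w] by auto
qed

lemma escape_bound_le:
  assumes "{z. R \<le> norm z} \<subseteq> escape_set f" and "f w = w"
  shows "escape_bound f \<le> R"
  unfolding escape_bound_def
proof (rule cSUP_least)
  show "- escape_set f \<noteq> {}"
    using fixed_point_notin_escape_set[of f w] assms(2) by auto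
next
  fix z assume "z \<in> - escape_set f"
  then show "norm z \<le> R"
    using assms(1) by force
qed

lemma expanding_subset_escape_set:
  fixes f :: "complex \<Rightarrow> complex"
  assumes expand: "\<And>z. R \<le> norm z \<Longrightarrow> norm z + c \<le> norm (f z)" and "c > 0"
  shows "{z. R \<le> norm z} \<subseteq> escape_set f"
proof
  fix z :: complex assume "z \<in> {z. R \<le> norm z}"
  then have z: "R \<le> norm z" by simp
  have orbit: "norm z + real n * c \<le> norm ((f ^^ n) z)" for n
  proof (induction n)
    case (Suc n)
    have "R \<le> norm ((f ^^ n) z)"
      using Suc.IH z \<open>c > 0\<close> mult_nonneg_nonneg[of "real n" c] by linarith
    then have "norm ((f ^^ n) z) + c \<le> norm (f ((f ^^ n) z))"
      by (rule expand)
    then show ?case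
      using Suc by (simp add: algebra_simps)
  qed simp
  have "filterlim (\<lambda>n. norm z + real n * c) at_top sequentially"
    using \<open>c > 0\<close> by real_asymp
  then have "filterlim (\<lambda>n. norm ((f ^^ n) z)) at_top sequentially"
    by (rule filterlim_at_top_mono) (use orbit in auto)
  then show "z \<in> escape_set f"
    unfolding escape_set_def filterlim_at_infinity_conv_norm_at_top by simp
qed

lemma power_ge_power_add:
  fixes t s r :: real
  assumes "n \<ge> 1" "t \<ge> 1" "s \<ge> 0" "t + s \<le> r"
  shows "t ^ n + s \<le> r ^ n"
proof -
  obtain k where n: "n = Suc k"
    using assms(1) by (cases n) auto
  have "s \<le> t ^ k * s"
    using assms by (simp add: mult_le_cancel_right1)
  then have "t ^ n + s \<le> t ^ k * (t + s)"
    using n by (simp add: algebra_simps)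
  also have "\<dots> \<le> (t + s) ^ k * (t + s)"
    using assms by (intro mult_right_mono power_mono) auto
  also have "\<dots> = (t + s) ^ n"
    using n by simp
  also have "\<dots> \<le> r ^ n"
    using assms by (intro power_mono) auto
  finally show ?thesis .
qed

lemma norm_monic_poly_ge:
  assumes "m \<ge> 1" "delta_condition m \<delta> a" "norm z \<ge> 1"
  shows "norm (monic_poly m a z) \<ge> (1 - real (m - 1) * \<delta>) * norm z ^ m - norm (a 0)"
proof -
  obtain k where m: "m = Suc k"
    using assms(1) by (cases m) auto
  define S where "S = (\<Sum>j<k. a (Suc j) * z ^ Suc j)"
  have f_eq: "monic_poly m a z = z ^ m + a 0 + S"
    unfolding monic_poly_def m sum.lessThan_Suc_shift S_def by simp
  have "norm S \<le> (\<Sum>j<k. norm (a (Suc j) * z ^ Suc j))"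
    unfolding S_def by (rule norm_sum)
  also have "\<dots> \<le> (\<Sum>j<k. \<delta> * norm z ^ m)"
  proof (rule sum_mono)
    fix j assume j: "j \<in> {..<k}"
    have "norm (a (Suc j)) < \<delta>"
      using assms(2) j m unfolding delta_condition_def by auto
    moreover have "norm z ^ Suc j \<le> norm z ^ m"
      using j m assms(3) by (intro power_increasing) auto
    ultimately show "norm (a (Suc j) * z ^ Suc j) \<le> \<delta> * norm z ^ m"
      by (simp add: norm_mult norm_power mult_mono')
  qed
  also have "\<dots> = real (m - 1) * \<delta> * norm z ^ m"
    using m by simp
  finally have "norm S \<le> real (m - 1) * \<delta> * norm z ^ m" .
  moreover have "norm (z ^ m) \<le> norm (monic_poly m a z) + norm (a 0) + norm S"
    using norm_triangle_ineq4[of "monic_poly m a z - a 0" S]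
      norm_triangle_ineq4[of "monic_poly m a z" "a 0"]
    unfolding f_eq by simp
  ultimately show ?thesis
    by (simp add: norm_power algebra_simps)
qed

text \<open>Chosen so that \<open>\<eta> = (m - 1) \<delta>\<close> satisfies \<open>\<eta> (2 + 2\<epsilon>/3) = \<epsilon>/6\<close>.\<close>
definition escape_delta :: "nat \<Rightarrow> real \<Rightarrow> real" where
  "escape_delta m \<epsilon> = \<epsilon> / (real (m - 1) * (12 + 4 * \<epsilon>))"

lemma monic_poly_expanding:
  assumes "m \<ge> 2" "\<epsilon> > 0" "delta_condition m (escape_delta m \<epsilon>) a"
    and "root (m - 1) 2 + 2 * \<epsilon> / 3 \<le> norm z" "norm (a 0) \<le> norm z + \<epsilon> / 3"
  shows "norm z + \<epsilon> / 6 \<le> norm (monic_poly m a z)"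
proof -
  define r where "r = norm z"
  define \<eta> where "\<eta> = real (m - 1) * escape_delta m \<epsilon>"
  have \<eta>: "\<eta> = \<epsilon> / (12 + 4 * \<epsilon>)"
    using assms(1) by (simp add: \<eta>_def escape_delta_def)
  have "\<eta> < 1"
    unfolding \<eta> using assms(2) by (simp add: divide_less_eq)
  have \<eta>_eq: "\<eta> * (2 + 2 * \<epsilon> / 3) = \<epsilon> / 6"
    unfolding \<eta> using assms(2) by (simp add: field_simps)
  have root: "1 \<le> root (m - 1) 2"
    using assms(1) by simp
  then have "r \<ge> 1"
    using assms(2,4) by (simp add: r_def)
  have r_pow: "2 + 2 * \<epsilon> / 3 \<le> r ^ (m - 1)"
    using power_ge_power_add[of "m - 1" "root (m - 1) 2" "2 * \<epsilon> / 3" r] root assms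
    by (simp add: r_def)
  have factor_eq: "2 + \<epsilon> / 2 = (1 - \<eta>) * (2 + 2 * \<epsilon> / 3)"
    unfolding left_diff_distrib mult_1 using \<eta>_eq by linarith
  have "2 * r + \<epsilon> / 2 \<le> r * (2 + \<epsilon> / 2)"
    using \<open>r \<ge> 1\<close> assms(2) by (simp add: distrib_left)
  also have "\<dots> = r * ((1 - \<eta>) * (2 + 2 * \<epsilon> / 3))"
    using factor_eq by simp
  also have "\<dots> \<le> r * ((1 - \<eta>) * r ^ (m - 1))"
    using r_pow \<open>\<eta> < 1\<close> \<open>r \<ge> 1\<close> by (intro mult_left_mono) auto
  also have "\<dots> = (1 - \<eta>) * r ^ m"
    using assms(1) by (cases m) auto
  also have "\<dots> \<le> norm (monic_poly m a z) + norm (a 0)"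
    using norm_monic_poly_ge[of m "escape_delta m \<epsilon>" a z] assms \<open>r \<ge> 1\<close>
    by (simp add: r_def \<eta>_def)
  finally show ?thesis
    using assms(2,5) \<open>r \<ge> 1\<close> by (simp add: r_def algebra_simps)
qed

theorem mainTheorem10:
  fixes m :: nat
  assumes "m \<ge> 3"
  shows "\<forall>\<epsilon>>0. \<exists>\<delta>>0. \<forall>a :: nat \<Rightarrow> complex.
           delta_condition m \<delta> a \<and> norm (a 0) \<ge> 2 powr (1 / (real m - 1)) + \<epsilon>
           \<longrightarrow> norm (a 0) - escape_bound (monic_poly m a) \<ge> \<epsilon> / 3
             \<and> {z. norm z \<ge> norm (a 0) - \<epsilon> / 3} \<subseteq> escape_set (monic_poly m a)"
proof (intro allI impI exI conjI)
  fix \<epsilon> :: real assume "\<epsilon> > 0"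
  show "escape_delta m \<epsilon> > 0"
    using assms \<open>\<epsilon> > 0\<close> by (simp add: escape_delta_def)
  fix a :: "nat \<Rightarrow> complex"
  assume a: "delta_condition m (escape_delta m \<epsilon>) a \<and> 2 powr (1 / (real m - 1)) + \<epsilon> \<le> norm (a 0)"
  have root_eq: "2 powr (1 / (real m - 1)) = root (m - 1) 2"
    using assms by (simp add: root_powr_inverse of_nat_diff)
  have "norm z + \<epsilon> / 6 \<le> norm (monic_poly m a z)" if "norm (a 0) - \<epsilon> / 3 \<le> norm z" for z
    using monic_poly_expanding[of m \<epsilon> a z] assms \<open>\<epsilon> > 0\<close> a that root_eq by auto
  then show escapes: "{z. norm (a 0) - \<epsilon> / 3 \<le> norm z} \<subseteq> escape_set (monic_poly m a)"
    using expanding_subset_escape_set[of "norm (a 0) - \<epsilon> / 3" "\<epsilon> / 6"] \<open>\<epsilon> > 0\<close>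
    by simp
  obtain w where "monic_poly m a w = w"
    using monic_poly_has_fixed_point[of m a] assms by auto
  then show "\<epsilon> / 3 \<le> norm (a 0) - escape_bound (monic_poly m a)"
    using escape_bound_le[OF escapes] by force
qed

end
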